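(* Let $x_+,x_-\in\hat A_n$ be complementary operators. Then (a) $[ia_k^\dagger a_k,[x_+,x_-]]=0$ for all $k\in\{1,\dots,n\}$, and (b) $[x_+,x_-]$ is a real linear combination of elements of the form $g_+^{(\tilde\alpha,\tilde\alpha)}=2i\,a^{(\tilde\alpha,\tilde\alpha)}$ with $\tilde\alpha\in\mathbb N_0^n$; i.e. $[x_+,x_-]\in\hat A_n^0\oplus\hat A_n^=$.
   Context: Fix $n\ge 1$. The Weyl algebra $A_n$ is the unital associative $\mathbb{C}$-algebra generated by $a_1,\dots,a_n,a_1^\dagger,\dots,a_n^\dagger$ subject to $[a_i,a_j^\dagger]=\delta_{ij}$ and $[a_i,a_j]=[a_i^\dagger,a_j^\dagger]=0$. For $\gamma=(\alpha,\beta)\in\mathbb N_0^{2n}$, $a^{\gamma}=(a_1^\dagger)^{\alpha_1}\cdots(a_n^\dagger)^{\alpha_n}a_1^{\beta_1}\cdots a_n^{\beta_n}$, $|\gamma|=\sum_j\alpha_j+\sum_j\beta_j$. The adjoint $\dagger$ is the conjugate-linear anti-automorphism with $(a_j)^\dagger=a_j^\dagger$, $(a_j^\dagger)^\dagger=a_j$. The skew-hermitian Weyl algebra is $\hat A_n=\{g\in A_n:g^\dagger=-g\}$, a real Lie algebra under the commutator; $g_+^\gamma=i((a^\gamma)^\dagger+a^\gamma)$. $\hat A_n^0$ is the real span of $2i$ and $2ia_k^\dagger a_k$; $\hat A_n^=$ is the real span of $2i\,a^{(\alpha,\alpha)}$ with $2|\alpha|\ge4$. Two elements $x_+,x_-\in\hat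 A_n$, neither lying in $\hat A_n^0\oplus\hat A_n^=$, are called complementary if for each $k\in\{1,\dots,n\}$ either (a) $[ia_k^\dagger a_k,x_\sigma]=0$ for both $\sigma\in\{+,-\}$, or (b) there is a real $\mu_k\neq0$ with $[ia_k^\dagger a_k,x_\sigma]=\sigma\mu_k x_{-\sigma}$ for both $\sigma\in\{+,-\}$ (signs identified with $\pm1$), and at least one index $k$ satisfies (b). *)

theory Defs
  imports Complex_Main
begin

text \<open>Concrete model of the Weyl algebra A_n in its normal-ordered (PBW) basis.
  The modes are indexed by a finite type 'n (so n = CARD('n) >= 1).
  A basis monomial a^(alpha,beta) = (a^dagger)^alpha a^beta is a pair of multi-indices;
  an element of A_n is a finitely supported coefficient function on such pairs.\<close>

type_synonym 'n mon = "('n \<Rightarrow> nat) \<times> ('n \<Rightarrow> nat)"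
type_synonym 'n weyl = "'n mon \<Rightarrow> complex"

definition wfin :: "'n weyl \<Rightarrow> bool" where
  "wfin x \<longleftrightarrow> finite {g. x g \<noteq> 0}"

text \<open>Coefficient of the basis monomial g in the product a^p a^q, obtained from the
  normal ordering rule a_j^m (a_j^dagger)^p = sum_k (m choose k)(p choose k) k! (a_j^dagger)^(p-k) a_j^(m-k)
  (the unique extension of the relations [a_i,a_j^dagger]=delta_ij, [a_i,a_j]=[a_i^dagger,a_j^dagger]=0).\<close>
definition nc_coeff :: "'n::finite mon \<Rightarrow> 'n mon \<Rightarrow> 'n mon \<Rightarrow> complex" where
  "nc_coeff p q g =
     (\<Sum>\<kappa> \<in> {\<kappa>. \<forall>j. \<kappa> j \<le> snd p j \<and> \<kappa> j \<le> fst q j}.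
        if g = ((\<lambda>j. fst p j + fst q j - \<kappa> j), (\<lambda>j. snd p j - \<kappa> j + snd q j))
        then of_nat (\<Prod>j\<in>UNIV. (snd p j choose \<kappa> j) * (fst q j choose \<kappa> j) * fact (\<kappa> j))
        else 0)"

definition wmult :: "'n::finite weyl \<Rightarrow> 'n weyl \<Rightarrow> 'n weyl" where
  "wmult x y = (\<lambda>g. \<Sum>p\<in>{p. x p \<noteq> 0}. \<Sum>q\<in>{q. y q \<noteq> 0}. x p * y q * nc_coeff p q g)"

definition wcomm :: "'n::finite weyl \<Rightarrow> 'n weyl \<Rightarrow> 'n weyl" where
  "wcomm x y = (\<lambda>g. wmult x y g - wmult y x g)"

definition wscale :: "complex \<Rightarrow> 'n weyl \<Rightarrow> 'n weyl" where
  "wscale c x = (\<lambda>g. c * x g)"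

definition wzero :: "'n weyl" where
  "wzero = (\<lambda>g. 0)"

definition wmon :: "'n mon \<Rightarrow> 'n weyl" where
  "wmon p = (\<lambda>g. if g = p then 1 else 0)"

definition unitidx :: "'n \<Rightarrow> ('n \<Rightarrow> nat)" where
  "unitidx k = (\<lambda>j. if j = k then 1 else 0)"

definition iN :: "'n \<Rightarrow> 'n weyl" where
  "iN k = wscale \<i> (wmon (unitidx k, unitidx k))"

definition wadj :: "'n weyl \<Rightarrow> 'n weyl" where
  "wadj x = (\<lambda>(\<alpha>, \<beta>). cnj (x (\<beta>, \<alpha>)))"

definition skew_weyl :: "'n weyl set" where
  "skew_weyl = {x. wfin x \<and> wadj x = (\<lambda>g. - x g)}"

definition hatA0 :: "'n::finite weyl set" where
  "hatA0 = {x. \<exists>(c0::real) (c::'n \<Rightarrow> real).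
      x = (\<lambda>g. of_real c0 * (2 * \<i>) * wmon (\<lambda>_. 0, \<lambda>_. 0) g
               + (\<Sum>k\<in>UNIV. of_real (c k) * (2 * \<i>) * wmon (unitidx k, unitidx k) g))}"

definition hatAeq :: "'n::finite weyl set" where
  "hatAeq = {x. \<exists>(S::('n \<Rightarrow> nat) set) (c::('n \<Rightarrow> nat) \<Rightarrow> real).
      finite S \<and> (\<forall>\<alpha>\<in>S. 2 * (\<Sum>j\<in>UNIV. \<alpha> j) \<ge> 4) \<and>
      x = (\<lambda>g. \<Sum>\<alpha>\<in>S. of_real (c \<alpha>) * (2 * \<i>) * wmon (\<alpha>, \<alpha>) g)}"

definition hatA0_eq :: "'n::finite weyl set" where
  "hatA0_eq = {(\<lambda>g. y g + z g) | y z. y \<in> hatA0 \<and> z \<in> hatAeq}"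

definition complementary :: "'n::finite weyl \<Rightarrow> 'n weyl \<Rightarrow> bool" where
  "complementary xp xm \<longleftrightarrow>
     xp \<in> skew_weyl \<and> xm \<in> skew_weyl \<and> xp \<notin> hatA0_eq \<and> xm \<notin> hatA0_eq \<and>
     (\<forall>k. (wcomm (iN k) xp = wzero \<and> wcomm (iN k) xm = wzero) \<or>
          (\<exists>\<mu>::real. \<mu> \<noteq> 0 \<and> wcomm (iN k) xp = wscale (of_real \<mu>) xm
                              \<and> wcomm (iN k) xm = wscale (of_real (- \<mu>)) xp)) \<and>
     (\<exists>k. \<exists>\<mu>::real. \<mu> \<noteq> 0 \<and> wcomm (iN k) xp = wscale (of_real \<mu>) xm
                              \<and> wcomm (iN k) xm = wscale (of_real (- \<mu>)) xp)"

end

theory Submission imports Defs "HOL-Library.FuncSet" begin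

(* The commutator with i a_k^dagger a_k multiplies the monomial a^(alpha,beta) by
   i (alpha_k - beta_k), and normal ordering is additive in these charges, so this action is a
   derivation.  For complementary x+, x- it rotates x+ into x- and back, hence annihilates
   [x+,x-] (it maps it to c [x-,x-] - c [x+,x+] = 0): every monomial of [x+,x-] has zero charge,
   i.e. alpha = beta.  Being skew-hermitian, [x+,x-] has purely imaginary diagonal coefficients,
   which is exactly membership in hat A_n^0 + hat A_n^=. *)

lemma finite_bounded_funs: "finite {\<kappa>::'n::finite \<Rightarrow> nat. \<forall>j. \<kappa> j \<le> b j}"
proof -
  have "{\<kappa>::'n \<Rightarrow> nat. \<forall>j. \<kappa> j \<le> b j} = Pi\<^sub>E UNIV (\<lambda>j. {..b j})"
    by (auto simp: PiE_UNIV_domain Pi_def)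
  thus ?thesis by (simp add: finite_PiE)
qed

lemma wmult_conv_sum:
  fixes x y :: "'n::finite weyl"
  assumes "finite A" "finite B" "{p. x p \<noteq> 0} \<subseteq> A" "{q. y q \<noteq> 0} \<subseteq> B"
  shows "wmult x y g = (\<Sum>p\<in>A. \<Sum>q\<in>B. x p * y q * nc_coeff p q g)"
proof -
  have "wmult x y g = (\<Sum>p\<in>A. \<Sum>q\<in>{q. y q \<noteq> 0}. x p * y q * nc_coeff p q g)"
    unfolding wmult_def by (rule sum.mono_neutral_left) (use assms finite_subset in auto)
  also have "\<dots> = (\<Sum>p\<in>A. \<Sum>q\<in>B. x p * y q * nc_coeff p q g)"
    by (rule sum.cong[OF refl], rule sum.mono_neutral_left) (use assms in auto)
  finally show ?thesis .
qed

lemma nc_coeff_nonzeroE: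
  assumes "nc_coeff p q g \<noteq> 0"
  obtains \<kappa> where "\<forall>j. \<kappa> j \<le> snd p j \<and> \<kappa> j \<le> fst q j"
    "g = ((\<lambda>j. fst p j + fst q j - \<kappa> j), (\<lambda>j. snd p j - \<kappa> j + snd q j))"
proof -
  from assms obtain \<kappa> where "\<kappa> \<in> {\<kappa>. \<forall>j. \<kappa> j \<le> snd p j \<and> \<kappa> j \<le> fst q j}"
    and "(if g = ((\<lambda>j. fst p j + fst q j - \<kappa> j), (\<lambda>j. snd p j - \<kappa> j + snd q j))
        then of_nat (\<Prod>j\<in>UNIV. (snd p j choose \<kappa> j) * (fst q j choose \<kappa> j) * fact (\<kappa> j))
        else (0::complex)) \<noteq> 0"
    unfolding nc_coeff_def by (rule sum.not_neutral_contains_not_neutral)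
  then show ?thesis using that by (auto split: if_splits)
qed

lemma finite_nc_coeff_support: "finite {g. nc_coeff p q (g::'n::finite mon) \<noteq> 0}"
proof -
  have "{g. nc_coeff p q g \<noteq> 0} \<subseteq>
      (\<lambda>\<kappa>. ((\<lambda>j. fst p j + fst q j - \<kappa> j), (\<lambda>j. snd p j - \<kappa> j + snd q j)))
        ` {\<kappa>. \<forall>j. \<kappa> j \<le> snd p j}"
    by (auto elim!: nc_coeff_nonzeroE)
  thus ?thesis using finite_bounded_funs finite_subset by blast
qed

lemma wfin_wmult:
  fixes x y :: "'n::finite weyl"
  assumes "wfin x" "wfin y"
  shows "wfin (wmult x y)"
proof -
  have "{g. wmult x y g \<noteq> 0} \<subseteq> (\<Union>p\<in>{p. x p \<noteq> 0}. \<Union>q\<in>{q. y q \<noteq> 0}. {g. nc_coeff p q g \<noteq> 0})"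
    unfolding wmult_def by (auto elim!: sum.not_neutral_contains_not_neutral) blast
  moreover have "finite (\<Union>p\<in>{p. x p \<noteq> 0}. \<Union>q\<in>{q. y q \<noteq> 0}. {g. nc_coeff p q g \<noteq> 0})"
    using assms finite_nc_coeff_support unfolding wfin_def by blast
  ultimately show ?thesis unfolding wfin_def using finite_subset by blast
qed

lemma wfin_wcomm:
  fixes x y :: "'n::finite weyl"
  assumes "wfin x" "wfin y"
  shows "wfin (wcomm x y)"
proof -
  have "{g. wcomm x y g \<noteq> 0} \<subseteq> {g. wmult x y g \<noteq> 0} \<union> {g. wmult y x g \<noteq> 0}"
    unfolding wcomm_def by auto
  thus ?thesis using wfin_wmult[OF assms] wfin_wmult[OF assms(2,1)]
    unfolding wfin_def using finite_subset by blast
qed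

lemma wmult_wscale_left:
  fixes x y :: "'n::finite weyl"
  assumes "wfin x" "wfin y"
  shows "wmult (wscale c x) y g = c * wmult x y g"
proof -
  let ?X = "{p. x p \<noteq> 0}" and ?Y = "{q. y q \<noteq> 0}"
  have "wmult (wscale c x) y g = (\<Sum>p\<in>?X. \<Sum>q\<in>?Y. wscale c x p * y q * nc_coeff p q g)"
    by (rule wmult_conv_sum) (use assms in \<open>auto simp: wfin_def wscale_def\<close>)
  also have "\<dots> = c * wmult x y g"
    unfolding wmult_def wscale_def by (simp add: sum_distrib_left mult.assoc)
  finally show ?thesis .
qed

lemma wmult_wscale_right:
  fixes x y :: "'n::finite weyl"
  assumes "wfin x" "wfin y"
  shows "wmult x (wscale c y) g = c * wmult x y g"
proof -
  let ?X = "{p. x p \<noteq> 0}" and ?Y = "{q. y q \<noteq> 0}"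
  have "wmult x (wscale c y) g = (\<Sum>p\<in>?X. \<Sum>q\<in>?Y. x p * wscale c y q * nc_coeff p q g)"
    by (rule wmult_conv_sum) (use assms in \<open>auto simp: wfin_def wscale_def\<close>)
  also have "\<dots> = c * wmult x y g"
    unfolding wmult_def wscale_def by (simp add: sum_distrib_left mult_ac)
  finally show ?thesis .
qed

lemma wcomm_wscale_left:
  "wfin x \<Longrightarrow> wfin y \<Longrightarrow> wcomm (wscale c x) y g = c * wcomm x y g"
  by (simp add: wcomm_def wmult_wscale_left wmult_wscale_right right_diff_distrib)

lemma wcomm_wscale_right:
  "wfin x \<Longrightarrow> wfin y \<Longrightarrow> wcomm x (wscale c y) g = c * wcomm x y g"
  by (simp add: wcomm_def wmult_wscale_left wmult_wscale_right right_diff_distrib)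

lemma wcomm_self: "wcomm x x = wzero"
  by (simp add: wcomm_def wzero_def)

definition charge :: "'n \<Rightarrow> 'n mon \<Rightarrow> int" where
  "charge k g = int (fst g k) - int (snd g k)"

definition charge_der :: "'n \<Rightarrow> 'n weyl \<Rightarrow> 'n weyl" where
  "charge_der k x = (\<lambda>g. \<i> * of_int (charge k g) * x g)"

lemma charge_nc_coeff:
  assumes "nc_coeff p q g \<noteq> 0"
  shows "charge k g = charge k p + charge k q"
proof -
  from assms obtain \<kappa> where "\<forall>j. \<kappa> j \<le> snd p j \<and> \<kappa> j \<le> fst q j"
    and g: "g = ((\<lambda>j. fst p j + fst q j - \<kappa> j), (\<lambda>j. snd p j - \<kappa> j + snd q j))"
    by (rule nc_coeff_nonzeroE)
  then have "\<kappa> k \<le> snd p k" "\<kappa> k \<le> fst q k" by auto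
  then show ?thesis unfolding charge_def g by simp
qed

lemma charge_der_wmult:
  fixes x y :: "'n::finite weyl"
  assumes "wfin x" "wfin y"
  shows "charge_der k (wmult x y) g = wmult (charge_der k x) y g + wmult x (charge_der k y) g"
proof -
  let ?X = "{p. x p \<noteq> 0}" and ?Y = "{q. y q \<noteq> 0}"
  have fin: "finite ?X" "finite ?Y" using assms by (auto simp: wfin_def)
  have "wmult (charge_der k x) y g + wmult x (charge_der k y) g =
      (\<Sum>p\<in>?X. \<Sum>q\<in>?Y. charge_der k x p * y q * nc_coeff p q g + x p * charge_der k y q * nc_coeff p q g)"
    by (subst (1 2) wmult_conv_sum[OF fin]) (auto simp: charge_der_def sum.distrib)
  also have "\<dots> = (\<Sum>p\<in>?X. \<Sum>q\<in>?Y. \<i> * of_int (charge k g) * (x p * y q * nc_coeff p q g))"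
  proof (intro sum.cong refl)
    fix p q
    show "charge_der k x p * y q * nc_coeff p q g + x p * charge_der k y q * nc_coeff p q g =
        \<i> * of_int (charge k g) * (x p * y q * nc_coeff p q g)"
      by (cases "nc_coeff p q g = 0") (simp_all add: charge_der_def charge_nc_coeff algebra_simps)
  qed
  also have "\<dots> = charge_der k (wmult x y) g"
    by (simp add: charge_der_def wmult_def sum_distrib_left)
  finally show ?thesis by simp
qed

lemma charge_der_wcomm:
  fixes x y :: "'n::finite weyl"
  assumes "wfin x" "wfin y"
  shows "charge_der k (wcomm x y) g = wcomm (charge_der k x) y g + wcomm x (charge_der k y) g"
  using charge_der_wmult[OF assms] charge_der_wmult[OF assms(2,1)]
  by (simp add: wcomm_def charge_der_def right_diff_distrib)

lemma le_unitidx_cases: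
  assumes "\<forall>j. \<kappa> j \<le> unitidx k j"
  shows "\<kappa> = (\<lambda>_. 0) \<or> \<kappa> = unitidx k"
proof (cases "\<kappa> k = 0")
  case True
  then have "\<kappa> = (\<lambda>_. 0)" using assms by (force simp: unitidx_def fun_eq_iff split: if_splits)
  then show ?thesis ..
next
  case False
  then have "\<kappa> = unitidx k" using assms by (force simp: unitidx_def fun_eq_iff split: if_splits)
  then show ?thesis ..
qed

lemma unitidx_neq_zero: "unitidx k \<noteq> (\<lambda>_. 0)"
  by (auto simp: unitidx_def fun_eq_iff)

lemma prod_choose_unitidx:
  "(\<Prod>j\<in>UNIV. (unitidx (k::'n::finite) j choose unitidx k j) * (m j choose unitidx k j) * fact (unitidx k j))
    = (m k :: nat)"
proof -
  have "(\<Prod>j\<in>UNIV. (unitidx k j choose unitidx k j) * (m j choose unitidx k j) * fact (unitidx k j))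
      = (\<Prod>j\<in>UNIV. if j = k then m k else 1)"
    by (rule prod.cong) (auto simp: unitidx_def)
  then show ?thesis by simp
qed

lemma nc_coeff_number_left:
  "nc_coeff (unitidx k, unitidx k) q g =
     (if g = ((\<lambda>j. fst q j + unitidx k j), (\<lambda>j. snd q j + unitidx k j)) then 1 else 0)
     + (if g = q then of_nat (fst q k) else 0)"
proof -
  let ?e = "unitidx k"
  let ?K = "{\<kappa>. \<forall>j. \<kappa> j \<le> ?e j \<and> \<kappa> j \<le> fst q j}"
  let ?f = "\<lambda>\<kappa>. if g = ((\<lambda>j. ?e j + fst q j - \<kappa> j), (\<lambda>j. ?e j - \<kappa> j + snd q j))
        then of_nat (\<Prod>j\<in>UNIV. (?e j choose \<kappa> j) * (fst q j choose \<kappa> j) * fact (\<kappa> j))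
        else (0::complex)"
  have fe: "?f ?e = (if g = q then of_nat (fst q k) else 0)"
  proof -
    have "(\<lambda>j. ?e j + fst q j - ?e j) = fst q" "(\<lambda>j. ?e j - ?e j + snd q j) = snd q" by auto
    then show ?thesis by (simp only: prod.collapse prod_choose_unitidx)
  qed
  have "nc_coeff (?e, ?e) q g = sum ?f ?K"
    unfolding nc_coeff_def fst_conv snd_conv ..
  also have "\<dots> = sum ?f {(\<lambda>_. 0), ?e}"
  proof (rule sum.mono_neutral_left)
    show "?K \<subseteq> {(\<lambda>_. 0), ?e}"
    proof
      fix \<kappa> assume "\<kappa> \<in> ?K"
      then have "\<forall>j. \<kappa> j \<le> ?e j" by simp
      then show "\<kappa> \<in> {(\<lambda>_. 0), ?e}" using le_unitidx_cases by simp
    qed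
    show "\<forall>\<kappa>\<in>{(\<lambda>_. 0), ?e} - ?K. ?f \<kappa> = 0"
    proof
      fix \<kappa> assume "\<kappa> \<in> {(\<lambda>_. 0), ?e} - ?K"
      then have "\<kappa> = ?e" and "\<not> (\<forall>j. ?e j \<le> fst q j)" by auto
      then have \<kappa>: "\<kappa> = ?e" and "fst q k = 0" by (auto simp: unitidx_def split: if_splits)
      then show "?f \<kappa> = 0" unfolding \<kappa> fe by simp
    qed
  qed simp
  also have "\<dots> = ?f (\<lambda>_. 0) + ?f ?e" using unitidx_neq_zero[of k] by simp
  finally show ?thesis unfolding fe by (simp add: add.commute)
qed

definition mswap :: "'n mon \<Rightarrow> 'n mon" where
  "mswap g = (snd g, fst g)"

lemma mswap_mswap [simp]: "mswap (mswap g) = g"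
  by (simp add: mswap_def)

lemma inj_mswap: "inj mswap"
  by (metis injI mswap_mswap)

lemma wadj_conv_mswap: "wadj x g = cnj (x (mswap g))"
  by (cases g) (simp add: wadj_def mswap_def)

lemma nc_coeff_mswap: "nc_coeff (mswap q) (mswap p) (mswap g) = nc_coeff p q g"
proof -
  have "(if (snd g, fst g) = ((\<lambda>j. snd q j + snd p j - \<kappa> j), (\<lambda>j. fst q j - \<kappa> j + fst p j))
         then of_nat (\<Prod>j\<in>UNIV. (fst q j choose \<kappa> j) * (snd p j choose \<kappa> j) * fact (\<kappa> j)) else 0) =
        (if g = ((\<lambda>j. fst p j + fst q j - \<kappa> j), (\<lambda>j. snd p j - \<kappa> j + snd q j))
         then of_nat (\<Prod>j\<in>UNIV. (snd p j choose \<kappa> j) * (fst q j choose \<kappa> j) * fact (\<kappa> j)) else (0::complex))"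
    if "\<forall>j. \<kappa> j \<le> snd p j \<and> \<kappa> j \<le> fst q j" for \<kappa>
  proof -
    have "(\<lambda>j. snd q j + snd p j - \<kappa> j) = (\<lambda>j. snd p j - \<kappa> j + snd q j)"
      "(\<lambda>j. fst q j - \<kappa> j + fst p j) = (\<lambda>j. fst p j + fst q j - \<kappa> j)"
      using that by (auto simp: fun_eq_iff)
    then show ?thesis by (cases g) (simp add: mult_ac)
  qed
  moreover have "{\<kappa>. \<forall>j. \<kappa> j \<le> fst q j \<and> \<kappa> j \<le> snd p j}
      = {\<kappa>. \<forall>j. \<kappa> j \<le> snd p j \<and> \<kappa> j \<le> fst q j}"
    by auto
  ultimately show ?thesis
    unfolding nc_coeff_def mswap_def fst_conv snd_conv by (intro sum.cong) auto
qed

lemma nc_coeff_number_right: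
  "nc_coeff q (unitidx k, unitidx k) g =
     (if g = ((\<lambda>j. fst q j + unitidx k j), (\<lambda>j. snd q j + unitidx k j)) then 1 else 0)
     + (if g = q then of_nat (snd q k) else 0)"
proof -
  have "nc_coeff q (unitidx k, unitidx k) g = nc_coeff (unitidx k, unitidx k) (mswap q) (mswap g)"
    using nc_coeff_mswap[of "(unitidx k, unitidx k)" q g] by (simp add: mswap_def)
  also have "\<dots> = (if g = ((\<lambda>j. fst q j + unitidx k j), (\<lambda>j. snd q j + unitidx k j)) then 1 else 0)
     + (if g = q then of_nat (snd q k) else 0)"
    unfolding nc_coeff_number_left by (cases g, cases q) (auto simp: mswap_def)
  finally show ?thesis .
qed

lemma wcomm_iN:
  fixes x :: "'n::finite weyl"
  assumes "wfin x"
  shows "wcomm (iN k) x = charge_der k x"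
proof
  fix g
  let ?e = "unitidx k" and ?S = "{q. x q \<noteq> 0}"
  have fS: "finite ?S" using assms by (simp add: wfin_def)
  have supp: "{p. iN k p \<noteq> 0} \<subseteq> {(?e, ?e)}"
    by (auto simp: iN_def wscale_def wmon_def split: if_splits)
  have iN_e: "iN k (?e, ?e) = \<i>"
    by (simp add: iN_def wscale_def wmon_def)
  have "wmult (iN k) x g = (\<Sum>q\<in>?S. \<i> * x q * nc_coeff (?e, ?e) q g)"
    using wmult_conv_sum[of "{(?e, ?e)}" ?S "iN k" x g] fS supp by (simp add: iN_e)
  moreover have "wmult x (iN k) g = (\<Sum>q\<in>?S. \<i> * x q * nc_coeff q (?e, ?e) g)"
    using wmult_conv_sum[of ?S "{(?e, ?e)}" x "iN k" g] fS supp by (simp add: iN_e mult_ac)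
  ultimately have "wcomm (iN k) x g = (\<Sum>q\<in>?S. \<i> * x q * (nc_coeff (?e, ?e) q g - nc_coeff q (?e, ?e) g))"
    unfolding wcomm_def by (simp add: sum_subtractf[symmetric] right_diff_distrib)
  also have "\<dots> = (\<Sum>q\<in>?S. if q = g then \<i> * x g * (of_nat (fst g k) - of_nat (snd g k)) else 0)"
    by (intro sum.cong refl) (simp add: nc_coeff_number_left nc_coeff_number_right)
  also have "\<dots> = charge_der k x g"
    by (cases "x g = 0") (simp_all add: fS charge_der_def charge_def mult_ac)
  finally show "wcomm (iN k) x g = charge_der k x g" .
qed

lemma cnj_nc_coeff [simp]: "cnj (nc_coeff p q g) = nc_coeff p q g"
  unfolding nc_coeff_def by (subst cnj_sum, rule sum.cong[OF refl], simp)

lemma wadj_wmult: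
  fixes x y :: "'n::finite weyl"
  assumes "wfin x" "wfin y"
  shows "wadj (wmult x y) g = wmult (wadj y) (wadj x) g"
proof -
  let ?X = "{p. x p \<noteq> 0}" and ?Y = "{p. y p \<noteq> 0}"
  have fin: "finite ?X" "finite ?Y" using assms by (auto simp: wfin_def)
  have supp: "{p. wadj z p \<noteq> 0} \<subseteq> mswap ` {p. z p \<noteq> 0}" for z :: "'n weyl"
    by (auto simp: wadj_conv_mswap intro: image_eqI[where x = "mswap _"])
  have "wmult (wadj y) (wadj x) g
      = (\<Sum>q\<in>mswap ` ?Y. \<Sum>p\<in>mswap ` ?X. wadj y q * wadj x p * nc_coeff q p g)"
    by (rule wmult_conv_sum) (use fin supp in auto)
  also have "\<dots> = (\<Sum>q\<in>?Y. \<Sum>p\<in>?X. cnj (y q) * cnj (x p) * nc_coeff p q (mswap g))"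
    by (simp add: sum.reindex[OF inj_on_subset[OF inj_mswap]] wadj_conv_mswap
        nc_coeff_mswap[of _ _ "mswap g", simplified])
  also have "\<dots> = (\<Sum>p\<in>?X. \<Sum>q\<in>?Y. cnj (x p) * cnj (y q) * nc_coeff p q (mswap g))"
    by (subst sum.swap) (simp add: mult_ac)
  also have "\<dots> = wadj (wmult x y) g"
    by (simp add: wadj_conv_mswap wmult_def cnj_sum)
  finally show ?thesis by simp
qed

lemma wadj_wcomm_skew:
  fixes x y :: "'n::finite weyl"
  assumes "x \<in> skew_weyl" "y \<in> skew_weyl"
  shows "wadj (wcomm x y) g = - wcomm x y g"
proof -
  have fin: "wfin x" "wfin y" and adj: "wadj x = (\<lambda>g. - x g)" "wadj y = (\<lambda>g. - y g)"
    using assms by (auto simp: skew_weyl_def)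
  have "wadj (wcomm x y) g = wadj (wmult x y) g - wadj (wmult y x) g"
    by (simp add: wadj_conv_mswap wcomm_def)
  also have "\<dots> = wmult y x g - wmult x y g"
    using fin by (simp add: wadj_wmult adj) (simp add: wmult_def)
  finally show ?thesis by (simp add: wcomm_def)
qed

lemma charge_der_wcomm_rotation:
  fixes x y :: "'n::finite weyl"
  assumes "wfin x" "wfin y" "charge_der k x = wscale c y" "charge_der k y = wscale (- c) x"
  shows "charge_der k (wcomm x y) = wzero"
proof
  fix g
  have "charge_der k (wcomm x y) g = c * wcomm y y g - c * wcomm x x g"
    using assms by (simp add: charge_der_wcomm wcomm_wscale_left wcomm_wscale_right)
  then show "charge_der k (wcomm x y) g = wzero g"
    by (simp add: wcomm_self wzero_def)
qed

(* Case (a) of complementarity is the rotation with c = 0. *)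
lemma complementary_rotation:
  assumes "complementary xp xm"
  obtains c where "wcomm (iN k) xp = wscale c xm" "wcomm (iN k) xm = wscale (- c) xp"
proof -
  from assms have "(wcomm (iN k) xp = wzero \<and> wcomm (iN k) xm = wzero) \<or>
      (\<exists>\<mu>::real. \<mu> \<noteq> 0 \<and> wcomm (iN k) xp = wscale (of_real \<mu>) xm
                      \<and> wcomm (iN k) xm = wscale (of_real (- \<mu>)) xp)"
    unfolding complementary_def by blast
  then show ?thesis
  proof
    assume "wcomm (iN k) xp = wzero \<and> wcomm (iN k) xm = wzero"
    then show ?thesis using that[of 0] by (simp add: wscale_def wzero_def)
  next
    assume "\<exists>\<mu>::real. \<mu> \<noteq> 0 \<and> wcomm (iN k) xp = wscale (of_real \<mu>) xm
                      \<and> wcomm (iN k) xm = wscale (of_real (- \<mu>)) xp"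
    then show ?thesis using that by auto
  qed
qed

lemma diagonal_if_charge_der_zero:
  assumes "\<forall>k. charge_der k w = wzero" "w g \<noteq> 0"
  shows "fst g = snd g"
proof
  fix k
  have "charge_der k w g = wzero g" using assms(1) by simp
  then show "fst g k = snd g k"
    using assms(2) by (simp add: charge_der_def wzero_def charge_def)
qed

lemma sum_wmon_diagonal:
  assumes "finite A"
  shows "(\<Sum>\<alpha>\<in>A. f \<alpha> * wmon (\<alpha>, \<alpha>) g) = (if fst g = snd g \<and> fst g \<in> A then f (fst g) else 0)"
proof -
  have "(\<Sum>\<alpha>\<in>A. f \<alpha> * wmon (\<alpha>, \<alpha>) g)
      = (\<Sum>\<alpha>\<in>A. if \<alpha> = fst g then (if fst g = snd g then f \<alpha> else 0) else 0)"
    by (intro sum.cong refl) (auto simp: wmon_def prod_eq_iff)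
  then show ?thesis by (simp only: sum.delta[OF assms]) auto
qed

lemma inj_unitidx: "inj unitidx"
  by (auto intro!: injI simp: unitidx_def fun_eq_iff split: if_splits)

lemma sum_le_one_iff_unitidx:
  fixes \<alpha> :: "'n::finite \<Rightarrow> nat"
  shows "(\<Sum>j\<in>UNIV. \<alpha> j) \<le> 1 \<longleftrightarrow> \<alpha> \<in> insert (\<lambda>_. 0) (range unitidx)"
proof
  assume le: "(\<Sum>j\<in>UNIV. \<alpha> j) \<le> 1"
  show "\<alpha> \<in> insert (\<lambda>_. 0) (range unitidx)"
  proof (cases "\<alpha> = (\<lambda>_. 0)")
    case False
    then obtain k where "\<alpha> k \<noteq> 0" by auto
    moreover have "\<alpha> k + (\<Sum>j\<in>UNIV - {k}. \<alpha> j) \<le> 1"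
      using le by (simp add: sum.remove)
    ultimately have "\<alpha> k = 1" "(\<Sum>j\<in>UNIV - {k}. \<alpha> j) = 0" by linarith+
    then have "\<alpha> k = 1" "\<forall>j\<in>UNIV - {k}. \<alpha> j = 0" by simp_all
    then have "\<alpha> = unitidx k" by (auto simp: unitidx_def fun_eq_iff)
    then show ?thesis by simp
  qed simp
qed (auto simp: unitidx_def)

lemma diagonal_low_in_hatA0:
  fixes r :: "('n::finite \<Rightarrow> nat) \<Rightarrow> real"
  shows "(\<lambda>g. if fst g = snd g \<and> (\<Sum>j\<in>UNIV. fst g j) \<le> 1 then of_real (r (fst g)) * (2 * \<i>) else 0)
    \<in> hatA0"
proof -
  let ?L = "insert (\<lambda>_. 0) (range unitidx) :: ('n \<Rightarrow> nat) set"
  let ?c = "\<lambda>\<alpha>. of_real (r \<alpha>) * (2 * \<i>)"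
  have "?c (\<lambda>_. 0) * wmon (\<lambda>_. 0, \<lambda>_. 0) g
      + (\<Sum>k\<in>UNIV. ?c (unitidx k) * wmon (unitidx k, unitidx k) g)
      = (\<Sum>\<alpha>\<in>?L. ?c \<alpha> * wmon (\<alpha>, \<alpha>) g)" for g
  proof -
    have "(\<lambda>_. 0) \<notin> range unitidx" using unitidx_neq_zero by (metis rangeE)
    then show ?thesis by (subst sum.insert) (simp_all add: sum.reindex[OF inj_unitidx])
  qed
  also have "\<dots> g = (if fst g = snd g \<and> (\<Sum>j\<in>UNIV. fst g j) \<le> 1 then ?c (fst g) else 0)" for g
    by (simp only: sum_wmon_diagonal[of ?L] sum_le_one_iff_unitidx finite_insert finite finite_imageI)
  finally show ?thesis
    unfolding hatA0_def by (intro CollectI exI[of _ "r (\<lambda>_. 0)"] exI[of _ "\<lambda>k. r (unitidx k)"]) auto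
qed

lemma diagonal_high_in_hatAeq:
  fixes r :: "('n::finite \<Rightarrow> nat) \<Rightarrow> real"
  assumes "finite S" "\<forall>\<alpha>\<in>S. 2 \<le> (\<Sum>j\<in>UNIV. \<alpha> j)"
  shows "(\<lambda>g. if fst g = snd g \<and> fst g \<in> S then of_real (r (fst g)) * (2 * \<i>) else 0) \<in> hatAeq"
  unfolding hatAeq_def using assms
  by (intro CollectI exI[of _ S] exI[of _ r]) (auto simp: sum_wmon_diagonal)

lemma diagonal_skew_in_hatA0_eq:
  fixes w :: "'n::finite weyl"
  assumes fin: "wfin w" and skew: "\<forall>g. wadj w g = - w g"
    and diagonal: "\<forall>g. w g \<noteq> 0 \<longrightarrow> fst g = snd g"
  shows "w \<in> hatA0_eq"
proof -
  define r where "r \<alpha> = Im (w (\<alpha>, \<alpha>)) / 2" for \<alpha>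
  define S where "S = {\<alpha>. w (\<alpha>, \<alpha>) \<noteq> 0 \<and> 2 \<le> (\<Sum>j\<in>UNIV. \<alpha> j)}"
  have w_eq: "w g = (if fst g = snd g then of_real (r (fst g)) * (2 * \<i>) else 0)" for g
  proof (cases g)
    case (Pair a b)
    have "cnj (w (a, a)) = - w (a, a)" using skew by (simp add: wadj_def)
    then have "w (a, a) = of_real (r a) * (2 * \<i>)" by (simp add: r_def complex_eq_iff)
    then show ?thesis using diagonal Pair by auto
  qed
  have "S \<subseteq> fst ` {g. w g \<noteq> 0}"
    unfolding S_def by (auto intro: image_eqI[of _ fst "(_, _)"])
  then have "finite S" using fin finite_surj unfolding wfin_def by blast
  define low where "low g = (if fst g = snd g \<and> (\<Sum>j\<in>UNIV. fst g j) \<le> 1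
      then of_real (r (fst g)) * (2 * \<i>) else 0)" for g :: "'n mon"
  define high where "high g = (if fst g = snd g \<and> fst g \<in> S
      then of_real (r (fst g)) * (2 * \<i>) else 0)" for g :: "'n mon"
  have "low \<in> hatA0"
    unfolding low_def by (rule diagonal_low_in_hatA0)
  moreover have "high \<in> hatAeq"
    unfolding high_def using \<open>finite S\<close> by (rule diagonal_high_in_hatAeq) (simp add: S_def)
  moreover have "w = (\<lambda>g. low g + high g)"
  proof
    fix g :: "'n mon"
    obtain a b where g: "g = (a, b)" by fastforce
    have "a \<in> S \<longleftrightarrow> r a \<noteq> 0 \<and> 2 \<le> (\<Sum>j\<in>UNIV. a j)"
      using w_eq[of "(a, a)"] by (simp add: S_def)
    then show "w g = low g + high g"
      using w_eq[of g] unfolding low_def high_def g by auto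
  qed
  ultimately show ?thesis
    unfolding hatA0_eq_def by blast
qed

theorem lemma7:
  fixes xp xm :: "'n::finite weyl"
  assumes "complementary xp xm"
  shows "(\<forall>k. wcomm (iN k) (wcomm xp xm) = wzero) \<and> wcomm xp xm \<in> hatA0_eq"
proof -
  have skew: "xp \<in> skew_weyl" "xm \<in> skew_weyl"
    using assms by (auto simp: complementary_def)
  then have fin: "wfin xp" "wfin xm" by (auto simp: skew_weyl_def)
  have charge_der_zero: "charge_der k (wcomm xp xm) = wzero" for k
  proof -
    obtain c where "wcomm (iN k) xp = wscale c xm" "wcomm (iN k) xm = wscale (- c) xp"
      using complementary_rotation[OF assms] .
    then show ?thesis
      using fin by (intro charge_der_wcomm_rotation) (simp_all add: wcomm_iN)
  qed
  have "\<forall>k. wcomm (iN k) (wcomm xp xm) = wzero"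
    using charge_der_zero by (simp add: wcomm_iN wfin_wcomm fin)
  moreover have "wcomm xp xm \<in> hatA0_eq"
    using wfin_wcomm[OF fin] wadj_wcomm_skew[OF skew]
      diagonal_if_charge_der_zero[OF allI[OF charge_der_zero]]
    by (intro diagonal_skew_in_hatA0_eq) auto
  ultimately show ?thesis ..
qed

end
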